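(* Let $k>1$, let $f$ be a positive function, differentiable on $[0,1]$, and define $g(R)=\dfrac{k-1}{\frac{k-1}{k}-R}$ for $R\neq \frac{k-1}{k}$. Consider the planar system $$\frac{dI}{d\tau}=I\,[f(R)(1-I-R)-k],\qquad \frac{dR}{d\tau}=(k-1)I-R.$$ A point $(I^*,R^* )$ is an endemic equilibrium of this system if and only if $R^*\in\left(0,\frac{k-1}{k}\right)$, $I^*\in\left(0,\frac1k\right)$, $I^*=\frac{1}{k-1}R^*$, and $f(R^* )=g(R^* )$.
   Context: An endemic equilibrium is an equilibrium point $(I^*,R^* )$ of the system with $I^*>0$. *)

theory Defs
  imports "HOL-Analysis.Analysis"
begin

definition g_fun :: "real \<Rightarrow> real \<Rightarrow> real" where
  "g_fun k R = (k - 1) / ((k - 1) / k - R)"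

definition dI :: "(real \<Rightarrow> real) \<Rightarrow> real \<Rightarrow> real \<Rightarrow> real \<Rightarrow> real" where
  "dI f k I R = I * (f R * (1 - I - R) - k)"

definition dR :: "real \<Rightarrow> real \<Rightarrow> real \<Rightarrow> real" where
  "dR k I R = (k - 1) * I - R"

definition is_equilibrium :: "(real \<Rightarrow> real) \<Rightarrow> real \<Rightarrow> real \<Rightarrow> real \<Rightarrow> bool" where
  "is_equilibrium f k I R \<longleftrightarrow> dI f k I R = 0 \<and> dR k I R = 0"

definition endemic_equilibrium :: "(real \<Rightarrow> real) \<Rightarrow> real \<Rightarrow> real \<Rightarrow> real \<Rightarrow> bool" where
  "endemic_equilibrium f k I R \<longleftrightarrow> is_equilibrium f k I R \<and> I > 0"

end

theory Submission
  imports Defs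
begin

text \<open>The \<open>R\<close>-nullcline is the line \<open>R = (k - 1) I\<close>, along which \<open>1 - I - R = 1 - k I\<close>.
  So for \<open>I > 0\<close> the equilibrium condition becomes \<open>f(R) (1 - k I) = k\<close>; as \<open>f > 0\<close> and
  \<open>k > 0\<close> this forces \<open>k I < 1\<close>, which bounds \<open>I\<close> and \<open>R\<close>, and dividing by \<open>1 - k I\<close>
  gives \<open>f(R) = g(R)\<close>.\<close>

lemma dR_eq_0_iff: "dR k I R = 0 \<longleftrightarrow> R = (k - 1) * I"
  by (auto simp: dR_def)

lemma dI_eq_0_iff:
  assumes "I \<noteq> 0"
  shows "dI f k I R = 0 \<longleftrightarrow> f R * (1 - I - R) = k"
  using assms by (simp add: dI_def)

lemma endemic_equilibrium_iff:
  "endemic_equilibrium f k I R \<longleftrightarrow> I > 0 \<and> R = (k - 1) * I \<and> f R * (1 - k * I) = k"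
  by (auto simp: endemic_equilibrium_def is_equilibrium_def dR_eq_0_iff dI_eq_0_iff
      algebra_simps)

text \<open>At \<open>k I = 1\<close> both sides are \<open>0\<close> by the convention \<open>x / 0 = 0\<close>.\<close>

lemma g_fun_on_nullcline:
  assumes "k \<noteq> 0" and "k \<noteq> 1"
  shows "g_fun k ((k - 1) * I) = k / (1 - k * I)"
proof -
  have "(k - 1) / k - (k - 1) * I = (k - 1) * (1 - k * I) / k"
    using assms(1) by (simp add: field_simps)
  then show ?thesis
    using assms by (simp add: g_fun_def)
qed

lemma nullcline_interval_iff:
  fixes k I :: real
  assumes "k > 1"
  shows "(k - 1) * I \<in> {0<..<(k - 1) / k} \<longleftrightarrow> I \<in> {0<..<1 / k}"
proof -
  have "(k - 1) * I < (k - 1) * (1 / k) \<longleftrightarrow> I < 1 / k"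
    using assms by (intro mult_less_cancel_left_pos) simp
  moreover have "0 < (k - 1) * I \<longleftrightarrow> 0 < I"
    using assms by (simp add: zero_less_mult_iff)
  ultimately show ?thesis
    by simp
qed

lemma mult_eq_pos_iff_eq_divide:
  fixes c x k :: real
  assumes "c > 0" and "k > 0"
  shows "c * x = k \<longleftrightarrow> x > 0 \<and> c = k / x"
  using assms by (auto simp: field_simps zero_less_mult_iff)

theorem theorem1:
  fixes f :: "real \<Rightarrow> real" and k I R :: real
  assumes "k > 1"
    and "\<forall>x. f x > 0"
    and "f differentiable_on {0..1}"
  shows "endemic_equilibrium f k I R \<longleftrightarrow>
           R \<in> {0<..<(k - 1) / k} \<and> I \<in> {0<..<1 / k} \<and>
           I = R / (k - 1) \<and> f R = g_fun k R"
proof -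
  have "k > 0" "k \<noteq> 1" and "f R > 0"
    using assms(1,2) by auto
  have "endemic_equilibrium f k I R \<longleftrightarrow>
      I > 0 \<and> R = (k - 1) * I \<and> 1 - k * I > 0 \<and> f R = k / (1 - k * I)"
    using endemic_equilibrium_iff mult_eq_pos_iff_eq_divide[OF \<open>f R > 0\<close> \<open>k > 0\<close>] by blast
  also have "\<dots> \<longleftrightarrow> I \<in> {0<..<1 / k} \<and> R = (k - 1) * I \<and> f R = g_fun k R"
  proof (cases "R = (k - 1) * I")
    case True
    then have "g_fun k R = k / (1 - k * I)"
      using \<open>k > 0\<close> \<open>k \<noteq> 1\<close> by (simp add: g_fun_on_nullcline)
    moreover have "1 - k * I > 0 \<longleftrightarrow> I < 1 / k"
      using \<open>k > 0\<close> by (simp add: field_simps)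
    ultimately show ?thesis
      by auto
  qed simp
  also have "\<dots> \<longleftrightarrow> R \<in> {0<..<(k - 1) / k} \<and> I \<in> {0<..<1 / k} \<and>
      I = R / (k - 1) \<and> f R = g_fun k R"
  proof -
    have "R = (k - 1) * I \<longleftrightarrow> I = R / (k - 1)"
      using assms(1) by (auto simp: field_simps)
    then show ?thesis
      using nullcline_interval_iff[OF assms(1), of I] by auto
  qed
  finally show ?thesis .
qed

end
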